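(* Let $A\in\mathbb{R}^{n\times n}$, $B\in\mathbb{R}^{n\times m}$, $0\le\gamma\le1$, $D\in\mathbb{S}^n$, $E\in\mathbb{S}^m$, $d\in\mathbb{R}^n$, $K^\dagger\in\mathbb{R}^{m\times n}$ and $k^\dagger\in\mathbb{R}^m$ be given. Then the optimization problem $$\begin{aligned}\min_{\tilde D,\tilde d,\tilde E,P,h}\ & \|\tilde D-D\|_F+\|\tilde d-d\|_2+\|\tilde E-E\|_F\\ \text{s.t. }\ & P=\tilde D+\gamma A'PA-{K^\dagger}'(\tilde E+\gamma B'PB)K^\dagger,\\ & (\tilde E+\gamma B'PB)K^\dagger=-\gamma B'PA,\\ & h=\tilde d+\gamma(A+BK^\dagger)'h,\\ & 2(\tilde E+\gamma B'PB)k^\dagger=-\gamma B'h,\\ & P\succeq0,\ \tilde D\succ0,\ \tilde E\succ0,\end{aligned}$$ over symmetric $\tilde D\in\mathbb{S}^n$, $P\in\mathbb{S}^n$, $\tilde E\in\mathbb{S}^m$ and vectors $\tilde d,h\in\mathbb{R}^n$, is convex.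
   Context: Prime denotes transpose; $\|\cdot\|_F$ is the Frobenius norm; $\mathbb{S}^n$ is the set of real symmetric $n\times n$ matrices; $\succeq0$ ($\succ0$) means positive semidefinite (definite). This is the attacker's problem of finding minimally changed cost parameters making the affine policy $u=K^\dagger x+k^\dagger$ optimal for the discounted LQG problem. *)

theory Defs
  imports "HOL-Analysis.Analysis"
begin

definition frob_norm :: "real^'n^'m \<Rightarrow> real" where
  "frob_norm M = sqrt (\<Sum>i\<in>UNIV. \<Sum>j\<in>UNIV. (M $ i $ j)^2)"

definition symmetric_mat :: "real^'n^'n \<Rightarrow> bool" where
  "symmetric_mat M \<longleftrightarrow> transpose M = M"

definition psd :: "real^'n^'n \<Rightarrow> bool" where
  "psd M \<longleftrightarrow> symmetric_mat M \<and> (\<forall>x. x \<bullet> (M *v x) \<ge> 0)"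

definition pd :: "real^'n^'n \<Rightarrow> bool" where
  "pd M \<longleftrightarrow> symmetric_mat M \<and> (\<forall>x. x \<noteq> 0 \<longrightarrow> x \<bullet> (M *v x) > 0)"

definition convex_problem :: "('a::real_vector \<Rightarrow> real) \<Rightarrow> 'a set \<Rightarrow> bool" where
  "convex_problem f S \<longleftrightarrow> convex S \<and> convex_on S f"

definition attack_objective ::
  "real^'n^'n \<Rightarrow> real^'n \<Rightarrow> real^'m^'m \<Rightarrow>
   ((real^'n^'n) \<times> (real^'n) \<times> (real^'m^'m) \<times> (real^'n^'n) \<times> (real^'n)) \<Rightarrow> real" where
  "attack_objective D d E =
     (\<lambda>(Dt, dt, Et, (P::real^'n^'n), (h::real^'n)).
       frob_norm (Dt - D) + norm (dt - d) + frob_norm (Et - E))"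

definition attack_feasible ::
  "real^'n^'n \<Rightarrow> real^'m^'n \<Rightarrow> real \<Rightarrow> real^'n^'m \<Rightarrow> real^'m \<Rightarrow>
   ((real^'n^'n) \<times> (real^'n) \<times> (real^'m^'m) \<times> (real^'n^'n) \<times> (real^'n)) set" where
  "attack_feasible A B \<gamma> K k = {(Dt, dt, Et, P, h).
     symmetric_mat Dt \<and> symmetric_mat P \<and> symmetric_mat Et \<and>
     P = Dt + \<gamma> *\<^sub>R (transpose A ** P ** A)
           - transpose K ** (Et + \<gamma> *\<^sub>R (transpose B ** P ** B)) ** K \<and>
     (Et + \<gamma> *\<^sub>R (transpose B ** P ** B)) ** K = - (\<gamma> *\<^sub>R (transpose B ** P ** A)) \<and>
     h = dt + \<gamma> *\<^sub>R (transpose (A + B ** K) *v h) \<and>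
     2 *\<^sub>R ((Et + \<gamma> *\<^sub>R (transpose B ** P ** B)) *v k) = - (\<gamma> *\<^sub>R (transpose B *v h)) \<and>
     psd P \<and> pd Dt \<and> pd Et}"

end

theory Submission
  imports Defs
begin

text \<open>Once the policy \<open>(K, k)\<close> is fixed, every equality constraint is linear in the
  decision variables \<open>(Dt, dt, Et, P, h)\<close>: the seemingly bilinear terms
  \<open>K' (Et + \<gamma> B' P B) K\<close> and \<open>(Et + \<gamma> B' P B) k\<close> only multiply unknowns by data.
  So the feasible set is the zero set of a linear map intersected with a product of the convex
  cones of positive definite and positive semidefinite matrices, and the objective is a sum of
  norms of affine maps.\<close>

lemma matrix_add_rdistrib: "((A::'a::semiring_1^'n^'m) + B) ** C = A ** C + B ** C"
  by (simp add: vec_eq_iff matrix_matrix_mult_def sum.distrib algebra_simps)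

lemma transpose_add: "transpose ((A::'a::plus^'n^'m) + B) = transpose A + transpose B"
  by (simp add: vec_eq_iff transpose_def)

lemma frob_norm_eq_norm: "frob_norm M = norm M"
  by (simp add: frob_norm_def norm_vec_def L2_set_def sum_nonneg)

lemma linear_quadratic_form: "linear (\<lambda>M::real^'n^'n. x \<bullet> (M *v x))"
  by (rule linearI)
    (simp_all add: matrix_vector_mult_add_rdistrib inner_add_right
      scaleR_matrix_vector_assoc[symmetric])

lemma convex_symmetric_mat: "convex {M::real^'n^'n. symmetric_mat M}"
proof -
  have "linear (\<lambda>M::real^'n^'n. transpose M - M)"
    by (rule linearI) (simp_all add: transpose_add transpose_scalar algebra_simps)
  then have "convex ((\<lambda>M::real^'n^'n. transpose M - M) -` {0})"
    by (rule convex_linear_vimage) simp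
  then show ?thesis
    by (simp add: symmetric_mat_def vimage_def)
qed

lemma convex_psd: "convex {M::real^'n^'n. psd M}"
proof -
  have eq: "{M. psd M} = {M. symmetric_mat M} \<inter> (\<Inter>x. (\<lambda>M. x \<bullet> (M *v x)) -` {0..})"
    by (auto simp: psd_def)
  show ?thesis
    unfolding eq by (intro convex_Int convex_symmetric_mat convex_INT convex_linear_vimage
        linear_quadratic_form convex_real_interval(1))
qed

lemma convex_pd: "convex {M::real^'n^'n. pd M}"
proof -
  have eq: "{M. pd M} = {M. symmetric_mat M} \<inter> (\<Inter>x\<in>-{0}. (\<lambda>M. x \<bullet> (M *v x)) -` {0<..})"
    by (auto simp: pd_def)
  show ?thesis
    unfolding eq by (intro convex_Int convex_symmetric_mat convex_INT convex_linear_vimage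
        linear_quadratic_form convex_real_interval(3))
qed

lemma convex_on_norm_linear_diff:
  fixes f :: "'a::real_vector \<Rightarrow> 'b::real_normed_vector"
  assumes "linear f" and "convex S"
  shows "convex_on S (\<lambda>x. norm (f x - c))"
proof (rule convex_onI[OF _ \<open>convex S\<close>])
  fix t :: real and x y
  assume t: "0 < t" "t < 1"
  interpret f: linear f by fact
  have "f ((1 - t) *\<^sub>R x + t *\<^sub>R y) - c = (1 - t) *\<^sub>R (f x - c) + t *\<^sub>R (f y - c)"
    by (simp only: f.add f.scaleR) (simp add: algebra_simps)
  also have "norm \<dots> \<le> (1 - t) * norm (f x - c) + t * norm (f y - c)"
    using t by (metis norm_triangle_ineq norm_scaleR abs_of_pos diff_gt_0_iff_gt)
  finally show "norm (f ((1 - t) *\<^sub>R x + t *\<^sub>R y) - c)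
      \<le> (1 - t) * norm (f x - c) + t * norm (f y - c)" .
qed

definition optimality_residual ::
  "real^'n^'n \<Rightarrow> real^'m^'n \<Rightarrow> real \<Rightarrow> real^'n^'m \<Rightarrow> real^'m \<Rightarrow>
   (real^'n^'n) \<times> (real^'n) \<times> (real^'m^'m) \<times> (real^'n^'n) \<times> (real^'n) \<Rightarrow>
   (real^'n^'n) \<times> (real^'n^'m) \<times> (real^'n) \<times> (real^'m)" where
  "optimality_residual A B \<gamma> K k = (\<lambda>(Dt, dt, Et, P, h).
     (Dt + \<gamma> *\<^sub>R (transpose A ** P ** A)
        - transpose K ** (Et + \<gamma> *\<^sub>R (transpose B ** P ** B)) ** K - P,
      (Et + \<gamma> *\<^sub>R (transpose B ** P ** B)) ** K + \<gamma> *\<^sub>R (transpose B ** P ** A),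
      dt + \<gamma> *\<^sub>R (transpose (A + B ** K) *v h) - h,
      2 *\<^sub>R ((Et + \<gamma> *\<^sub>R (transpose B ** P ** B)) *v k) + \<gamma> *\<^sub>R (transpose B *v h)))"

lemma linear_optimality_residual: "linear (optimality_residual A B \<gamma> K k)"
  by (rule linearI)
    (auto simp: optimality_residual_def matrix_add_ldistrib matrix_add_rdistrib
      scalar_matrix_assoc[symmetric] matrix_scalar_ac matrix_vector_mult_add_rdistrib
      scaleR_matrix_vector_assoc[symmetric] scaleR_vector_matrix_assoc algebra_simps)

lemma attack_feasible_eq:
  "attack_feasible A B \<gamma> K k = optimality_residual A B \<gamma> K k -` {0}
     \<inter> ({M. pd M} \<times> UNIV \<times> {M. pd M} \<times> {M. psd M} \<times> UNIV)"
  by (auto simp: attack_feasible_def optimality_residual_def psd_def pd_def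
      eq_neg_iff_add_eq_0 zero_prod_def)

lemma attack_objective_eq:
  "attack_objective D d E
     = (\<lambda>z. norm (fst z - D) + norm (fst (snd z) - d) + norm (fst (snd (snd z)) - E))"
  by (auto simp: attack_objective_def frob_norm_eq_norm)

theorem proposition3:
  fixes A :: "real^'n^'n" and B :: "real^'m^'n" and \<gamma> :: real
    and D :: "real^'n^'n" and E :: "real^'m^'m" and d :: "real^'n"
    and K :: "real^'n^'m" and k :: "real^'m"
  assumes "0 \<le> \<gamma>" and "\<gamma> \<le> 1"
    and "symmetric_mat D" and "symmetric_mat E"
  shows "convex_problem (attack_objective D d E) (attack_feasible A B \<gamma> K k)"
proof -
  have feasible: "convex (attack_feasible A B \<gamma> K k)"
    unfolding attack_feasible_eq
    by (intro convex_Int convex_linear_vimage convex_Times linear_optimality_residual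
        convex_pd convex_psd) simp_all
  moreover have "convex_on (attack_feasible A B \<gamma> K k) (attack_objective D d E)"
    unfolding attack_objective_eq
    by (intro convex_on_add convex_on_norm_linear_diff feasible linear_fst
        linear_compose[OF linear_snd linear_fst, unfolded comp_def]
        linear_compose[OF linear_compose[OF linear_snd linear_snd] linear_fst, unfolded comp_def])
  ultimately show ?thesis
    by (simp add: convex_problem_def)
qed

end
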